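(* Let $\mathcal G$ be a doubly connected molecular graph in which there is at least one edge joining an internal molecule to an external molecule. Then for any two isolated subsets of molecules $\mathbf M_1$ and $\mathbf M_2$ of $\mathcal G$, either $\mathbf M_1\subseteq \mathbf M_2$, or $\mathbf M_2\subseteq \mathbf M_1$, or $\mathbf M_1\cap \mathbf M_2=\emptyset$.
   Context: A molecular graph here is a finite multigraph whose vertices are called molecules; the molecules are partitioned into internal molecules and external molecules. Each edge joins two distinct molecules and has a type: it is a diffusive edge, a blue solid edge, or an edge of some other type (e.g. a dotted edge); parallel edges are allowed. The subgraph consisting of the internal molecules and the edges between them is doubly connected if there exist two disjoint sets of edges, $\mathcal B_{black}$ consisting only of diffusive edges between internal molecules and $\mathcal B_{blue}$ consisting only of blue solid or diffusive edges between internal molecules, such that each of $\mathcal B_{black}$ and $\mathcal B_{blue}$ contains a spanning tree of the set of all internal molecules. The molecular graph $\mathcal G$ is called doubly connected if this internal subgraph is doubly connected (the spanning trees need not contain the external molecules). A (nonempty) subset $\mathbf M$ of internal molecules is called isolated if the total number of edges of $\mathcal G$ (of any type) joining a molecule of $\mathbf M$ to a molecule of $\mathbf M^c$ is exactly two, where $\mathbf M^c$ consists of all internal molecules not in $\mathbf M$ together with all external molecules. *)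

theory Defs
  imports Main
begin

datatype edge_type = Diffusive | BlueSolid | OtherType nat

text \<open>Edges are abstract identifiers (so parallel edges are allowed); each edge has a
  pair of endpoints (unordered in meaning) and a type.\<close>
record ('v, 'e) molgraph =
  internal :: "'v set"
  external :: "'v set"
  edges    :: "'e set"
  ends     :: "'e \<Rightarrow> 'v \<times> 'v"
  etype    :: "'e \<Rightarrow> edge_type"

definition molecules :: "('v, 'e) molgraph \<Rightarrow> 'v set" where
  "molecules G = internal G \<union> external G"

definition wf_molgraph :: "('v, 'e) molgraph \<Rightarrow> bool" where
  "wf_molgraph G \<longleftrightarrow>
     finite (internal G) \<and> finite (external G) \<and> finite (edges G) \<and>
     internal G \<inter> external G = {} \<and>
     (\<forall>e\<in>edges G. fst (ends G e) \<in> molecules G \<and> snd (ends G e) \<in> molecules G \<and>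
                   fst (ends G e) \<noteq> snd (ends G e))"

definition joins :: "('v, 'e) molgraph \<Rightarrow> 'e \<Rightarrow> 'v set \<Rightarrow> 'v set \<Rightarrow> bool" where
  "joins G e A B \<longleftrightarrow>
     (fst (ends G e) \<in> A \<and> snd (ends G e) \<in> B) \<or> (snd (ends G e) \<in> A \<and> fst (ends G e) \<in> B)"

definition edge_rel :: "('v, 'e) molgraph \<Rightarrow> 'e set \<Rightarrow> ('v \<times> 'v) set" where
  "edge_rel G T = {(u, v). \<exists>e\<in>T. ends G e = (u, v) \<or> ends G e = (v, u)}"

definition is_spanning_tree :: "('v, 'e) molgraph \<Rightarrow> 'v set \<Rightarrow> 'e set \<Rightarrow> bool" where
  "is_spanning_tree G V T \<longleftrightarrow>
     finite T \<and>
     (\<forall>e\<in>T. fst (ends G e) \<in> V \<and> snd (ends G e) \<in> V) \<and>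
     (\<forall>u\<in>V. \<forall>v\<in>V. (u, v) \<in> (edge_rel G T)\<^sup>*) \<and>
     card T + 1 = card V"

definition contains_spanning_tree :: "('v, 'e) molgraph \<Rightarrow> 'v set \<Rightarrow> 'e set \<Rightarrow> bool" where
  "contains_spanning_tree G V B \<longleftrightarrow> (\<exists>T\<subseteq>B. is_spanning_tree G V T)"

definition internal_edge :: "('v, 'e) molgraph \<Rightarrow> 'e \<Rightarrow> bool" where
  "internal_edge G e \<longleftrightarrow> e \<in> edges G \<and> fst (ends G e) \<in> internal G \<and> snd (ends G e) \<in> internal G"

definition doubly_connected :: "('v, 'e) molgraph \<Rightarrow> bool" where
  "doubly_connected G \<longleftrightarrow>
     (\<exists>Bblack Bblue.
        Bblack \<inter> Bblue = {} \<and>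
        (\<forall>e\<in>Bblack. internal_edge G e \<and> etype G e = Diffusive) \<and>
        (\<forall>e\<in>Bblue. internal_edge G e \<and> (etype G e = BlueSolid \<or> etype G e = Diffusive)) \<and>
        contains_spanning_tree G (internal G) Bblack \<and>
        contains_spanning_tree G (internal G) Bblue)"

definition isolated :: "('v, 'e) molgraph \<Rightarrow> 'v set \<Rightarrow> bool" where
  "isolated G M \<longleftrightarrow>
     M \<noteq> {} \<and> M \<subseteq> internal G \<and>
     card {e \<in> edges G. joins G e M ((internal G - M) \<union> external G)} = 2"

end

theory Submission
  imports Defs
begin

text \<open>Suppose M1 and M2 overlap without being nested. The two boundary edges of an isolated
  set M must be one edge of the black spanning tree and one of the (edge-disjoint) blue one,
  since each tree has to leave M. Hence the black tree crosses the boundary of M1 by a single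
  edge and that of M2 by a single edge. The internal end of an edge to an external molecule lies
  outside M1 and M2, so the four cells M1 \<inter> M2, M1 - M2, M2 - M1 and the rest of the internal
  molecules are all nonempty; but two edges can join at most three of the four cells, so the
  black tree would not be connected.\<close>

definition crosses :: "('v, 'e) molgraph \<Rightarrow> 'e \<Rightarrow> 'v set \<Rightarrow> bool" where
  "crosses G e S \<longleftrightarrow> (fst (ends G e) \<in> S) \<noteq> (snd (ends G e) \<in> S)"

definition boundary :: "('v, 'e) molgraph \<Rightarrow> 'v set \<Rightarrow> 'e set" where
  "boundary G M = {e \<in> edges G. joins G e M ((internal G - M) \<union> external G)}"

lemma rtrancl_edge_rel_crosses:
  assumes "(u, v) \<in> (edge_rel G T)\<^sup>*" "u \<in> S" "v \<notin> S"
  shows "\<exists>e\<in>T. crosses G e S"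
  using assms
proof (induction rule: rtrancl_induct)
  case (step y z)
  show ?case
  proof (cases "y \<in> S")
    case True
    from step.hyps(2) obtain e where "e \<in> T" "ends G e = (y, z) \<or> ends G e = (z, y)"
      by (auto simp: edge_rel_def)
    with True step.prems show ?thesis
      unfolding crosses_def by force
  qed (use step in blast)
qed simp

lemma spanning_tree_crosses:
  assumes "is_spanning_tree G V T" "s \<in> V \<inter> S" "t \<in> V - S"
  shows "\<exists>e\<in>T. crosses G e S"
proof -
  have "(s, t) \<in> (edge_rel G T)\<^sup>*"
    using assms unfolding is_spanning_tree_def by blast
  with assms show ?thesis
    by (blast intro: rtrancl_edge_rel_crosses)
qed

lemma crosses_cell_imp_crosses:
  assumes "crosses G e S" "fst (ends G e) \<in> V" "snd (ends G e) \<in> V"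
    and "S \<in> {M1 \<inter> M2, M1 - M2, M2 - M1, V - (M1 \<union> M2)}"
  shows "crosses G e M1 \<or> crosses G e M2"
  using assms unfolding crosses_def by auto

text \<open>A pair separates a cell only if one of its points lies in it, so equal pairs reach at
  most two cells. Otherwise the first pair lies in M2 or outside it, i.e. within the cells
  M1 \<inter> M2, M2 - M1 or within M1 - M2, V - (M1 \<union> M2); likewise the second pair lies within
  M1 \<inter> M2, M1 - M2 or within M2 - M1, V - (M1 \<union> M2); no combination reaches all four cells.\<close>
lemma two_pairs_cannot_split_four_cells:
  assumes "\<forall>S\<in>{M1 \<inter> M2, M1 - M2, M2 - M1, V - (M1 \<union> M2)}.
      (p1 \<in> S) \<noteq> (q1 \<in> S) \<or> (p2 \<in> S) \<noteq> (q2 \<in> S)"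
    and "p1 \<in> V" "q1 \<in> V" "p2 \<in> V" "q2 \<in> V"
    and "(p1, q1) = (p2, q2) \<or> (p1 \<in> M2) = (q1 \<in> M2) \<and> (p2 \<in> M1) = (q2 \<in> M1)"
  shows False
  using assms by auto

lemma single_crossings_leave_empty_cell:
  assumes tree: "is_spanning_tree G V T"
    and "M1 \<subseteq> V" "M2 \<subseteq> V" "k1 \<in> T" "k2 \<in> T"
    and cross1: "\<And>e. e \<in> T \<Longrightarrow> crosses G e M1 \<Longrightarrow> e = k1"
    and cross2: "\<And>e. e \<in> T \<Longrightarrow> crosses G e M2 \<Longrightarrow> e = k2"
  shows "M1 \<inter> M2 = {} \<or> M1 - M2 = {} \<or> M2 - M1 = {} \<or> V - (M1 \<union> M2) = {}"
proof (rule ccontr)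
  let ?cells = "{M1 \<inter> M2, M1 - M2, M2 - M1, V - (M1 \<union> M2)}"
  assume "\<not> ?thesis"
  then obtain a b c d
    where cells: "a \<in> M1 \<inter> M2" "b \<in> M1 - M2" "c \<in> M2 - M1" "d \<in> V - (M1 \<union> M2)"
    by blast
  have ends_in_V: "fst (ends G e) \<in> V" "snd (ends G e) \<in> V" if "e \<in> T" for e
    using tree that unfolding is_spanning_tree_def by auto
  have cell_crossed: "crosses G k1 S \<or> crosses G k2 S" if S: "S \<in> ?cells" for S
  proof -
    obtain s t where "s \<in> V \<inter> S" "t \<in> V - S"
      using S cells \<open>M1 \<subseteq> V\<close> \<open>M2 \<subseteq> V\<close> by auto
    then obtain e where "e \<in> T" "crosses G e S"
      using spanning_tree_crosses[OF tree] by blast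
    then have "crosses G e M1 \<or> crosses G e M2"
      using crosses_cell_imp_crosses[OF _ ends_in_V[OF \<open>e \<in> T\<close>] S] by blast
    with \<open>e \<in> T\<close> \<open>crosses G e S\<close> cross1 cross2 show ?thesis
      by blast
  qed
  have "ends G k1 = ends G k2 \<or> \<not> crosses G k1 M2 \<and> \<not> crosses G k2 M1"
    using cross1 cross2 \<open>k1 \<in> T\<close> \<open>k2 \<in> T\<close> by metis
  with cell_crossed show False
    unfolding crosses_def
    by (intro two_pairs_cannot_split_four_cells[where V = V])
      (simp_all add: ends_in_V \<open>k1 \<in> T\<close> \<open>k2 \<in> T\<close> prod_eq_iff)
qed

lemma crosses_imp_in_boundary:
  assumes "internal_edge G e" "M \<subseteq> internal G" "crosses G e M"
  shows "e \<in> boundary G M"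
  using assms unfolding internal_edge_def boundary_def joins_def crosses_def by auto

lemma spanning_tree_meets_boundary:
  assumes "is_spanning_tree G (internal G) T" "\<forall>e\<in>T. internal_edge G e"
    and "m \<in> M" "M \<subseteq> internal G" "t \<in> internal G - M"
  shows "T \<inter> boundary G M \<noteq> {}"
proof -
  obtain e where "e \<in> T" "crosses G e M"
    using spanning_tree_crosses[OF assms(1)] assms(3-5) by blast
  then have "e \<in> boundary G M"
    using assms(2,4) by (blast intro: crosses_imp_in_boundary)
  with \<open>e \<in> T\<close> show ?thesis
    by blast
qed

definition disjoint_spanning_trees :: "('v, 'e) molgraph \<Rightarrow> 'e set \<Rightarrow> 'e set \<Rightarrow> bool" where
  "disjoint_spanning_trees G T1 T2 \<longleftrightarrow>
     is_spanning_tree G (internal G) T1 \<and> is_spanning_tree G (internal G) T2 \<and>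
     T1 \<inter> T2 = {} \<and> (\<forall>e\<in>T1 \<union> T2. internal_edge G e)"

lemma doubly_connected_imp_disjoint_spanning_trees:
  assumes "doubly_connected G"
  obtains T1 T2 where "disjoint_spanning_trees G T1 T2"
proof -
  obtain B1 B2 where "B1 \<inter> B2 = {}" "\<forall>e\<in>B1 \<union> B2. internal_edge G e"
    "contains_spanning_tree G (internal G) B1" "contains_spanning_tree G (internal G) B2"
    using assms unfolding doubly_connected_def by blast
  moreover from this obtain T1 T2 where "T1 \<subseteq> B1" "is_spanning_tree G (internal G) T1"
    "T2 \<subseteq> B2" "is_spanning_tree G (internal G) T2"
    unfolding contains_spanning_tree_def by blast
  ultimately have "disjoint_spanning_trees G T1 T2"
    unfolding disjoint_spanning_trees_def by blast
  then show thesis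
    by (rule that)
qed

lemma isolated_boundary_in_trees:
  assumes "isolated G M" "t \<in> internal G - M" and trees: "disjoint_spanning_trees G T1 T2"
  obtains e1 e2 where "boundary G M = {e1, e2}" "e1 \<in> T1" "e2 \<in> T2"
proof -
  have "M \<noteq> {}" "M \<subseteq> internal G" and card: "card (boundary G M) = 2"
    using \<open>isolated G M\<close> unfolding isolated_def boundary_def by auto
  then obtain m where "m \<in> M" by blast
  note meets = spanning_tree_meets_boundary[OF _ _ \<open>m \<in> M\<close> \<open>M \<subseteq> internal G\<close> assms(2)]
  have "T1 \<inter> boundary G M \<noteq> {}" "T2 \<inter> boundary G M \<noteq> {}"
    using trees unfolding disjoint_spanning_trees_def by (simp_all add: meets)
  then obtain e1 e2
    where e1: "e1 \<in> T1" "e1 \<in> boundary G M" and e2: "e2 \<in> T2" "e2 \<in> boundary G M"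
    by blast
  have "e1 \<noteq> e2"
    using e1 e2 trees unfolding disjoint_spanning_trees_def by blast
  have "finite (boundary G M)"
    using card by (intro card_ge_0_finite) simp
  moreover have "card {e1, e2} = card (boundary G M)"
    using \<open>e1 \<noteq> e2\<close> card by simp
  ultimately have "boundary G M = {e1, e2}"
    using e1 e2 by (metis card_subset_eq empty_subsetI insert_subset)
  with that e1 e2 show thesis
    by blast
qed

lemma isolated_crossed_once_by_tree:
  assumes "isolated G M" "t \<in> internal G - M" "disjoint_spanning_trees G T1 T2"
  obtains k where "k \<in> T1" "\<And>e. e \<in> T1 \<Longrightarrow> crosses G e M \<Longrightarrow> e = k"
proof -
  obtain k b where "boundary G M = {k, b}" "k \<in> T1" "b \<in> T2"
    using isolated_boundary_in_trees[OF assms] .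
  moreover have "e \<in> boundary G M" if "e \<in> T1" "crosses G e M" for e
  proof (rule crosses_imp_in_boundary)
    show "internal_edge G e"
      using \<open>e \<in> T1\<close> assms(3) unfolding disjoint_spanning_trees_def by blast
    show "M \<subseteq> internal G"
      using assms(1) unfolding isolated_def by blast
  qed (rule that(2))
  moreover have "b \<notin> T1"
    using \<open>b \<in> T2\<close> assms(3) unfolding disjoint_spanning_trees_def by blast
  ultimately show thesis
    using that by blast
qed

lemma isolated_boundary_internal:
  assumes "isolated G M" "t \<in> internal G - M" "disjoint_spanning_trees G T1 T2"
    and "e \<in> boundary G M"
  shows "internal_edge G e"
proof -
  obtain k b where "boundary G M = {k, b}" "k \<in> T1" "b \<in> T2"
    using isolated_boundary_in_trees[OF assms(1-3)] .
  with assms(4) have "e \<in> T1 \<union> T2"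
    by auto
  with assms(3) show ?thesis
    unfolding disjoint_spanning_trees_def by blast
qed

lemma external_neighbour_notin:
  assumes "wf_molgraph G" "x \<in> edges G" "joins G x {d} (external G)"
    and "\<And>e. e \<in> boundary G M \<Longrightarrow> internal_edge G e"
  shows "d \<notin> M"
proof
  assume "d \<in> M"
  with assms(2,3) have "x \<in> boundary G M"
    unfolding boundary_def joins_def by auto
  moreover have "\<not> internal_edge G x"
    using assms(1,3) unfolding wf_molgraph_def internal_edge_def joins_def by auto
  ultimately show False
    using assms(4) by blast
qed

theorem claim5p3:
  fixes G :: "('v, 'e) molgraph" and M1 M2 :: "'v set"
  assumes "wf_molgraph G"
    and "doubly_connected G"
    and "\<exists>e\<in>edges G. joins G e (internal G) (external G)"
    and "isolated G M1"
    and "isolated G M2"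
  shows "M1 \<subseteq> M2 \<or> M2 \<subseteq> M1 \<or> M1 \<inter> M2 = {}"
proof (rule ccontr)
  assume overlap: "\<not> ?thesis"
  have M_internal: "M1 \<subseteq> internal G" "M2 \<subseteq> internal G"
    using assms(4,5) unfolding isolated_def by auto
  with overlap obtain t1 t2 where t: "t1 \<in> internal G - M1" "t2 \<in> internal G - M2"
    by blast
  obtain T1 T2 where trees: "disjoint_spanning_trees G T1 T2"
    using doubly_connected_imp_disjoint_spanning_trees[OF assms(2)] .
  obtain k1 where k1: "k1 \<in> T1" "\<And>e. e \<in> T1 \<Longrightarrow> crosses G e M1 \<Longrightarrow> e = k1"
    using isolated_crossed_once_by_tree[OF assms(4) t(1) trees] by blast
  obtain k2 where k2: "k2 \<in> T1" "\<And>e. e \<in> T1 \<Longrightarrow> crosses G e M2 \<Longrightarrow> e = k2"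
    using isolated_crossed_once_by_tree[OF assms(5) t(2) trees] by blast
  have "is_spanning_tree G (internal G) T1"
    using trees unfolding disjoint_spanning_trees_def by blast
  from single_crossings_leave_empty_cell[OF this M_internal k1(1) k2(1) k1(2) k2(2)]
  have empty_cell:
    "M1 \<inter> M2 = {} \<or> M1 - M2 = {} \<or> M2 - M1 = {} \<or> internal G - (M1 \<union> M2) = {}" .
  obtain x d where "x \<in> edges G" "d \<in> internal G" "joins G x {d} (external G)"
    using assms(3) unfolding joins_def by auto
  then have "d \<notin> M1" "d \<notin> M2"
    using external_neighbour_notin[OF assms(1)]
      isolated_boundary_internal[OF assms(4) t(1) trees]
      isolated_boundary_internal[OF assms(5) t(2) trees] by metis+
  with \<open>d \<in> internal G\<close> overlap empty_cell show False
    by blast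
qed

end
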